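(* A collective choice problem $\mathcal C$ is Finitely Approximable if and only if it satisfies Thin Individual Indifference.
   Context: Collective choice problem $\mathcal C$: players $i\in N\cup\{A\}$ (voters $N$ and agenda setter $A$) with complete, transitive, continuous preferences $\succsim_i$ on a compact metrizable policy space $X$ with metric $d$. $d(x,B)=\inf_{y\in B}d(x,y)$. A generic $\epsilon$-grid is a finite set $X_\epsilon\subseteq X$ with $\max_{x\in X}d(x,X_\epsilon)<\epsilon$ such that every player's preference is antisymmetric on $X_\epsilon$. $\mathcal C$ is Finitely Approximable if for every $x\in X$ and $\epsilon>0$ there is a generic $\epsilon$-grid containing $x$. With $I_i(x)=\{y\in X: y\sim_i x\}$, $\mathcal C$ satisfies Thin Individual Indifference if $I_i(x)\setminus\{x\}$ has empty interior for every player $i$ and every $x\in X$. *)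

theory Defs
  imports "HOL-Analysis.Analysis"
begin

text \<open>Players: voters N (finite) plus agenda setter A; the player set is insert A N.
  Preference of player i: R i x y means x \<succeq>_i y.\<close>

definition complete_pref :: "'a set \<Rightarrow> ('a \<Rightarrow> 'a \<Rightarrow> bool) \<Rightarrow> bool" where
  "complete_pref X r \<longleftrightarrow> (\<forall>x\<in>X. \<forall>y\<in>X. r x y \<or> r y x)"

definition transitive_pref :: "'a set \<Rightarrow> ('a \<Rightarrow> 'a \<Rightarrow> bool) \<Rightarrow> bool" where
  "transitive_pref X r \<longleftrightarrow> (\<forall>x\<in>X. \<forall>y\<in>X. \<forall>z\<in>X. r x y \<and> r y z \<longrightarrow> r x z)"

definition continuous_pref :: "'a::topological_space set \<Rightarrow> ('a \<Rightarrow> 'a \<Rightarrow> bool) \<Rightarrow> bool" where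
  "continuous_pref X r \<longleftrightarrow>
     (\<forall>x\<in>X. closedin (top_of_set X) {y\<in>X. r y x} \<and> closedin (top_of_set X) {y\<in>X. r x y})"

definition collective_choice_problem ::
  "'a::metric_space set \<Rightarrow> 'p set \<Rightarrow> 'p \<Rightarrow> ('p \<Rightarrow> 'a \<Rightarrow> 'a \<Rightarrow> bool) \<Rightarrow> bool" where
  "collective_choice_problem X N A R \<longleftrightarrow>
     compact X \<and> finite N \<and>
     (\<forall>i\<in>insert A N. complete_pref X (R i) \<and> transitive_pref X (R i) \<and> continuous_pref X (R i))"

definition generic_grid ::
  "'a::metric_space set \<Rightarrow> 'p set \<Rightarrow> 'p \<Rightarrow> ('p \<Rightarrow> 'a \<Rightarrow> 'a \<Rightarrow> bool) \<Rightarrow> real \<Rightarrow> 'a set \<Rightarrow> bool" where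
  "generic_grid X N A R \<epsilon> G \<longleftrightarrow>
     finite G \<and> G \<subseteq> X \<and> (\<forall>x\<in>X. infdist x G < \<epsilon>) \<and>
     (\<forall>i\<in>insert A N. \<forall>x\<in>G. \<forall>y\<in>G. R i x y \<and> R i y x \<longrightarrow> x = y)"

definition finitely_approximable ::
  "'a::metric_space set \<Rightarrow> 'p set \<Rightarrow> 'p \<Rightarrow> ('p \<Rightarrow> 'a \<Rightarrow> 'a \<Rightarrow> bool) \<Rightarrow> bool" where
  "finitely_approximable X N A R \<longleftrightarrow>
     (\<forall>x\<in>X. \<forall>\<epsilon>>0. \<exists>G. generic_grid X N A R \<epsilon> G \<and> x \<in> G)"

definition indiff_set :: "'a set \<Rightarrow> ('a \<Rightarrow> 'a \<Rightarrow> bool) \<Rightarrow> 'a \<Rightarrow> 'a set" where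
  "indiff_set X r x = {y\<in>X. r y x \<and> r x y}"

definition thin_individual_indifference ::
  "'a::metric_space set \<Rightarrow> 'p set \<Rightarrow> 'p \<Rightarrow> ('p \<Rightarrow> 'a \<Rightarrow> 'a \<Rightarrow> bool) \<Rightarrow> bool" where
  "thin_individual_indifference X N A R \<longleftrightarrow>
     (\<forall>i\<in>insert A N. \<forall>x\<in>X. (top_of_set X) interior_of (indiff_set X (R i) x - {x}) = {})"

end

theory Submission
  imports Defs
begin

text \<open>Necessity: a nonempty open set of points indifferent to, but distinct from, \<open>x\<close> must
  meet every sufficiently fine grid containing \<open>x\<close>, destroying antisymmetry on the grid.
  Sufficiency: cover \<open>X\<close> by finitely many \<open>\<epsilon>/2\<close>-balls and pick one grid point in each ball,
  one at a time. Each new point must avoid the sets \<open>I\<^sub>i(p) - {p}\<close> for the finitely many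
  players \<open>i\<close> and points \<open>p\<close> already chosen. Each \<open>I\<^sub>i(p)\<close> is closed by continuity and,
  by thin indifference, \<open>I\<^sub>i(p) - {p}\<close> has empty interior, so deleting it from a nonempty
  open set leaves a nonempty open set.\<close>

lemma infdist_less_imp_dist_less:
  assumes "G \<noteq> {}" "infdist y G < e"
  obtains g where "g \<in> G" "dist y g < e"
proof -
  have "bdd_below (dist y ` G)"
    by (rule bdd_belowI[of _ 0]) auto
  then show ?thesis
    using assms that by (auto simp: infdist_notempty cINF_less_iff)
qed

lemma openin_subset_avoiding_thin_closedin:
  assumes "openin U V" "V \<noteq> {}" "closedin U F" "closedin U {p}" "U interior_of (F - {p}) = {}"
  obtains W where "openin U W" "W \<noteq> {}" "W \<subseteq> V" "W \<inter> (F - {p}) = {}"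
proof (cases "V - F = {}")
  case False
  then show ?thesis using that assms by (auto simp: openin_diff)
next
  case True
  have "openin U (V - {p})" using assms by (simp add: openin_diff)
  then have "V - {p} \<subseteq> U interior_of (F - {p})"
    using True by (simp add: interior_of_maximal Diff_mono)
  then have "V \<inter> (F - {p}) = {}" using assms(5) by blast
  then show ?thesis using that assms by blast
qed

lemma openin_subset_avoiding_finitely_many_thin_closedin:
  assumes "finite K"
    and "\<And>k. k \<in> K \<Longrightarrow> closedin U (F k) \<and> closedin U {p k} \<and> U interior_of (F k - {p k}) = {}"
    and "openin U V" "V \<noteq> {}"
  obtains W where "openin U W" "W \<noteq> {}" "W \<subseteq> V" "\<forall>k\<in>K. W \<inter> (F k - {p k}) = {}"
proof -
  have "\<exists>W. openin U W \<and> W \<noteq> {} \<and> W \<subseteq> V \<and> (\<forall>k\<in>K. W \<inter> (F k - {p k}) = {})"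
    using assms(1,2)
  proof (induction K rule: finite_induct)
    case empty
    show ?case using assms(3,4) by (intro exI[of _ V]) simp
  next
    case (insert k K)
    have "\<And>j. j \<in> K \<Longrightarrow> closedin U (F j) \<and> closedin U {p j} \<and> U interior_of (F j - {p j}) = {}"
      using insert.prems by simp
    then obtain W where W: "openin U W" "W \<noteq> {}" "W \<subseteq> V" "\<forall>j\<in>K. W \<inter> (F j - {p j}) = {}"
      using insert.IH by blast
    have "closedin U (F k)" "closedin U {p k}" "U interior_of (F k - {p k}) = {}"
      using insert.prems by simp_all
    then obtain W' where "openin U W'" "W' \<noteq> {}" "W' \<subseteq> W" "W' \<inter> (F k - {p k}) = {}"
      using openin_subset_avoiding_thin_closedin[OF W(1,2)] by blast
    then show ?case using W by (intro exI[of _ W']) blast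
  qed
  then show ?thesis using that by blast
qed

definition prefs_antisymmetric_on :: "'p set \<Rightarrow> ('p \<Rightarrow> 'a \<Rightarrow> 'a \<Rightarrow> bool) \<Rightarrow> 'a set \<Rightarrow> bool" where
  "prefs_antisymmetric_on P R G \<longleftrightarrow> (\<forall>i\<in>P. \<forall>x\<in>G. \<forall>y\<in>G. R i x y \<and> R i y x \<longrightarrow> x = y)"

lemma generic_grid_iff:
  "generic_grid X N A R \<epsilon> G \<longleftrightarrow>
     finite G \<and> G \<subseteq> X \<and> (\<forall>x\<in>X. infdist x G < \<epsilon>) \<and> prefs_antisymmetric_on (insert A N) R G"
  unfolding generic_grid_def prefs_antisymmetric_on_def by blast

lemma prefs_antisymmetric_on_insert:
  assumes "prefs_antisymmetric_on P R G" "g \<in> X"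
    and "\<forall>i\<in>P. \<forall>p\<in>G. g \<notin> indiff_set X (R i) p - {p}"
  shows "prefs_antisymmetric_on P R (insert g G)"
  using assms unfolding prefs_antisymmetric_on_def indiff_set_def by blast

lemma closedin_indiff_set:
  assumes "continuous_pref X r" "p \<in> X"
  shows "closedin (top_of_set X) (indiff_set X r p)"
proof -
  have "indiff_set X r p = {y\<in>X. r y p} \<inter> {y\<in>X. r p y}"
    unfolding indiff_set_def by auto
  then show ?thesis
    using assms unfolding continuous_pref_def by (simp add: closedin_Int)
qed

lemma generic_grid_meets_openin:
  assumes "openin (top_of_set X) U" "y \<in> U"
  obtains e where "e > 0" "\<And>G. generic_grid X N A R e G \<Longrightarrow> G \<noteq> {} \<Longrightarrow> G \<inter> U \<noteq> {}"
proof -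
  obtain e where "e > 0" and e: "\<forall>x'\<in>X. dist x' y < e \<longrightarrow> x' \<in> U"
    using assms unfolding openin_euclidean_subtopology_iff by blast
  have "y \<in> X" using openin_imp_subset[OF assms(1)] assms(2) by blast
  have "G \<inter> U \<noteq> {}" if G: "generic_grid X N A R e G" "G \<noteq> {}" for G
  proof -
    have "infdist y G < e" using G(1) \<open>y \<in> X\<close> by (simp add: generic_grid_def)
    then obtain g where "g \<in> G" "dist y g < e"
      using infdist_less_imp_dist_less[OF G(2)] by blast
    moreover have "g \<in> X" using \<open>g \<in> G\<close> G(1) by (auto simp: generic_grid_def)
    ultimately have "g \<in> U" using e by (simp add: dist_commute)
    then show ?thesis using \<open>g \<in> G\<close> by blast
  qed
  with \<open>e > 0\<close> show ?thesis by (rule that)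
qed

lemma thin_individual_indifference_if_finitely_approximable:
  assumes "finitely_approximable X N A R"
  shows "thin_individual_indifference X N A R"
  unfolding thin_individual_indifference_def
proof (intro ballI equals0I)
  fix i x y
  assume i: "i \<in> insert A N" and x: "x \<in> X"
  define T where "T = (top_of_set X) interior_of (indiff_set X (R i) x - {x})"
  assume "y \<in> T"
  have "openin (top_of_set X) T" unfolding T_def by (rule openin_interior_of)
  then obtain e where "e > 0"
    and meets: "\<And>G. generic_grid X N A R e G \<Longrightarrow> G \<noteq> {} \<Longrightarrow> G \<inter> T \<noteq> {}"
    using \<open>y \<in> T\<close> by (rule generic_grid_meets_openin[where N = N and A = A and R = R]) blast
  obtain G where G: "generic_grid X N A R e G" "x \<in> G"
    using assms x \<open>e > 0\<close> unfolding finitely_approximable_def by blast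
  then obtain g where "g \<in> G" "g \<in> T" using meets[OF G(1)] by blast
  moreover have "T \<subseteq> indiff_set X (R i) x - {x}"
    unfolding T_def by (rule interior_of_subset)
  ultimately have "R i g x" "R i x g" "g \<noteq> x"
    unfolding indiff_set_def by auto
  moreover have "prefs_antisymmetric_on (insert A N) R G"
    using G(1) by (simp add: generic_grid_iff)
  ultimately show False
    using i \<open>g \<in> G\<close> G(2) unfolding prefs_antisymmetric_on_def by blast
qed

lemma prefs_antisymmetric_extension_meets_openin:
  assumes "collective_choice_problem X N A R" "thin_individual_indifference X N A R"
    and "finite G" "G \<subseteq> X" "prefs_antisymmetric_on (insert A N) R G"
    and "openin (top_of_set X) V" "V \<noteq> {}"
  obtains g where "g \<in> V" "prefs_antisymmetric_on (insert A N) R (insert g G)"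
proof -
  let ?K = "insert A N \<times> G" and ?F = "\<lambda>(i, p). indiff_set X (R i) p"
  have finite: "finite ?K"
    using assms(1,3) unfolding collective_choice_problem_def by simp
  have thin: "closedin (top_of_set X) (?F k) \<and> closedin (top_of_set X) {snd k}
      \<and> (top_of_set X) interior_of (?F k - {snd k}) = {}" if "k \<in> ?K" for k
  proof -
    obtain i p where k: "k = (i, p)" "i \<in> insert A N" "p \<in> G" using \<open>k \<in> ?K\<close> by blast
    then have "p \<in> X" using assms(4) by blast
    have "continuous_pref X (R i)"
      using assms(1) k(2) unfolding collective_choice_problem_def by blast
    then have "closedin (top_of_set X) (indiff_set X (R i) p)"
      using \<open>p \<in> X\<close> by (rule closedin_indiff_set)
    moreover have "closedin (top_of_set X) {p}"
      using closedin_closed_Int[of "{p}" X] \<open>p \<in> X\<close> by simp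
    moreover have "(top_of_set X) interior_of (indiff_set X (R i) p - {p}) = {}"
      using assms(2) k(2) \<open>p \<in> X\<close> unfolding thin_individual_indifference_def by blast
    ultimately show ?thesis using k(1) by simp
  qed
  obtain W where "openin (top_of_set X) W" "W \<noteq> {}" "W \<subseteq> V"
    and avoid: "\<forall>k\<in>?K. W \<inter> (?F k - {snd k}) = {}"
    by (rule openin_subset_avoiding_finitely_many_thin_closedin[OF finite thin assms(6,7)])
  then obtain g where "g \<in> W" by blast
  then have "g \<in> V" "g \<in> X" using \<open>W \<subseteq> V\<close> openin_imp_subset[OF assms(6)] by auto
  have "g \<notin> indiff_set X (R i) p - {p}" if "i \<in> insert A N" "p \<in> G" for i p
  proof -
    have "W \<inter> (?F (i, p) - {snd (i, p)}) = {}"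
      using avoid that by blast
    then show ?thesis using \<open>g \<in> W\<close> by auto
  qed
  then have "prefs_antisymmetric_on (insert A N) R (insert g G)"
    using prefs_antisymmetric_on_insert[OF assms(5) \<open>g \<in> X\<close>] by blast
  with \<open>g \<in> V\<close> show ?thesis by (rule that)
qed

lemma prefs_antisymmetric_set_meeting_finitely_many_openin:
  assumes "collective_choice_problem X N A R" "thin_individual_indifference X N A R"
    and "x \<in> X" "finite \<V>" "\<And>V. V \<in> \<V> \<Longrightarrow> openin (top_of_set X) V \<and> V \<noteq> {}"
  obtains G where "finite G" "G \<subseteq> X" "x \<in> G" "prefs_antisymmetric_on (insert A N) R G"
    "\<forall>V\<in>\<V>. G \<inter> V \<noteq> {}"
proof -
  have "\<exists>G. finite G \<and> G \<subseteq> X \<and> x \<in> G \<and> prefs_antisymmetric_on (insert A N) R G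
      \<and> (\<forall>V\<in>\<V>. G \<inter> V \<noteq> {})"
    using assms(4,5)
  proof (induction \<V> rule: finite_induct)
    case empty
    have "prefs_antisymmetric_on (insert A N) R {x}"
      unfolding prefs_antisymmetric_on_def by blast
    then show ?case using assms(3) by blast
  next
    case (insert V \<V>)
    then have "\<And>V'. V' \<in> \<V> \<Longrightarrow> openin (top_of_set X) V' \<and> V' \<noteq> {}"
      by blast
    then obtain G where G: "finite G" "G \<subseteq> X" "x \<in> G" "prefs_antisymmetric_on (insert A N) R G"
      "\<forall>V\<in>\<V>. G \<inter> V \<noteq> {}"
      using insert.IH by blast
    have V: "openin (top_of_set X) V" "V \<noteq> {}" using insert.prems by blast+
    obtain g where "g \<in> V" "prefs_antisymmetric_on (insert A N) R (insert g G)"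
      using prefs_antisymmetric_extension_meets_openin[OF assms(1,2) G(1,2,4) V] by blast
    moreover have "g \<in> X" using \<open>g \<in> V\<close> openin_imp_subset[OF V(1)] by blast
    ultimately show ?case using G by (intro exI[of _ "insert g G"]) auto
  qed
  then show ?thesis using that by blast
qed

lemma finitely_approximable_if_thin_individual_indifference:
  assumes "collective_choice_problem X N A R" "thin_individual_indifference X N A R"
  shows "finitely_approximable X N A R"
  unfolding finitely_approximable_def
proof (intro ballI allI impI)
  fix x \<epsilon> assume x: "x \<in> X" and "(\<epsilon>::real) > 0"
  have "compact X" using assms(1) unfolding collective_choice_problem_def by blast
  moreover have "\<epsilon>/2 > 0" using \<open>\<epsilon> > 0\<close> by simp
  ultimately obtain C where C: "finite C" "C \<subseteq> X" "X \<subseteq> (\<Union>c\<in>C. ball c (\<epsilon>/2))"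
    using seq_compact_imp_totally_bounded[OF compact_imp_seq_compact, rule_format] by metis
  let ?\<V> = "(\<lambda>c. ball c (\<epsilon>/2) \<inter> X) ` C"
  have "openin (top_of_set X) (ball c (\<epsilon>/2) \<inter> X) \<and> ball c (\<epsilon>/2) \<inter> X \<noteq> {}"
    if "c \<in> C" for c
  proof
    show "openin (top_of_set X) (ball c (\<epsilon>/2) \<inter> X)"
      by (simp add: Int_commute openin_open_Int)
    have "c \<in> ball c (\<epsilon>/2) \<inter> X" using that C(2) \<open>\<epsilon>/2 > 0\<close> by auto
    then show "ball c (\<epsilon>/2) \<inter> X \<noteq> {}" by blast
  qed
  then have balls: "\<And>V. V \<in> ?\<V> \<Longrightarrow> openin (top_of_set X) V \<and> V \<noteq> {}"
    by blast
  obtain G where G: "finite G" "G \<subseteq> X" "x \<in> G" "prefs_antisymmetric_on (insert A N) R G"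
    and meets: "\<forall>V\<in>?\<V>. G \<inter> V \<noteq> {}"
    using C(1)
    by (rule prefs_antisymmetric_set_meeting_finitely_many_openin[OF assms x finite_imageI balls])
  have "infdist y G < \<epsilon>" if "y \<in> X" for y
  proof -
    obtain c where "c \<in> C" "dist c y < \<epsilon>/2" using C(3) \<open>y \<in> X\<close> by auto
    have "G \<inter> (ball c (\<epsilon>/2) \<inter> X) \<noteq> {}"
      by (rule bspec[OF meets imageI[OF \<open>c \<in> C\<close>]])
    then obtain g where "g \<in> G" "dist c g < \<epsilon>/2" by auto
    with \<open>dist c y < \<epsilon>/2\<close> have "dist y g < \<epsilon>"
      using dist_triangle[of y g c] by (simp add: dist_commute)
    then show ?thesis using infdist_le[OF \<open>g \<in> G\<close>, of y] by linarith
  qed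
  then show "\<exists>G. generic_grid X N A R \<epsilon> G \<and> x \<in> G"
    using G by (auto simp: generic_grid_iff)
qed

theorem lemma3:
  fixes X :: "'a::metric_space set" and N :: "'p set" and A :: 'p
    and R :: "'p \<Rightarrow> 'a \<Rightarrow> 'a \<Rightarrow> bool"
  assumes "collective_choice_problem X N A R"
  shows "finitely_approximable X N A R \<longleftrightarrow> thin_individual_indifference X N A R"
  using thin_individual_indifference_if_finitely_approximable
    finitely_approximable_if_thin_individual_indifference[OF assms]
  by (rule iffI)

end
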